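(* Let $n\ge 0$ and let $H^n$ be the graded ring defined below. The only invertible elements of degree $0$ in the center of $H^n$ are $1$ and $-1$; that is, the group of units of the degree $0$ part $Z_0(H^n)$ of the center of $H^n$ is $\{\pm 1\}$.
   Context: Let $\mathcal{A}=\mathbb{Z}[X]/(X^2)$, graded by $\deg 1=-1$, $\deg X=1$; it is a commutative Frobenius algebra with counit $\epsilon(1)=0,\ \epsilon(X)=1$ and comultiplication $\Delta(1)=1\otimes X+X\otimes 1$, $\Delta(X)=X\otimes X$. Let $F$ be the associated $(1+1)$-dimensional TQFT: it assigns $\mathcal{A}^{\otimes k}$ to a disjoint union of $k$ planar circles, and to cobordisms the maps built from multiplication (merging two circles), $\Delta$ (splitting), the unit (birth) and $\epsilon$ (death). For a graded abelian group $M$, $M\{i\}$ denotes the shifted group with $M\{i\}_j=M_{j-i}$. A crossingless matching of $2n$ points is a collection of $n$ disjoint arcs in the lower half-plane (a flat tangle with no bottom endpoints and $2n$ top endpoints); let $B^n$ be the set of these. For a flat tangle $a$, $W(a)$ denotes its reflection in a horizontal line; for $a,b\in B^n$, $W(b)a$ ($W(b)$ placed on top of $a$) is a disjoint union of circles. Define $H^n=\bigoplus_{a,b\in B^n}{}_b(H^n)_a$ with ${}_b(H^n)_a=F(W(b)a)\{n\}$. Multiplication ${}_c(H^n)_b\otimes{}_d(H^n)_a\to H^n$ is zero if $b\neq d$, and for $b=d$ is the map $F(W(c)b)\otimes F(W(b)a)\to F(W(c)a)$ induced by the minimal saddle cobordism from $W(c)b\,W(b)a$ to $W(c)a$ which contracts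 the arcs of $b$ against their mirror images in $W(b)$. This makes $H^n$ an associative unital graded ring (nonnegatively graded), with unit $\sum_a e_a$, where $e_a=1\otimes\cdots\otimes 1\in{}_a(H^n)_a$. *)

theory Defs
  imports Main
begin

text \<open>The $2n$ top endpoints are the natural numbers $0,\dots,2n-1$. A crossingless
matching is a fixed-point-free involution of $\{0..<2n\}$ (identity outside) whose arcs
do not cross (i.e. are nested or disjoint), which is exactly the condition that the
arcs can be drawn disjointly in the lower half-plane.\<close>

definition Bn :: "nat \<Rightarrow> (nat \<Rightarrow> nat) set" where
  "Bn n = {a. (\<forall>i<2*n. a i < 2*n \<and> a i \<noteq> i \<and> a (a i) = i)
             \<and> (\<forall>i. 2*n \<le> i \<longrightarrow> a i = i)
             \<and> (\<forall>i j k l. i < j \<and> a i = j \<and> k < l \<and> a k = l \<and> i < k \<and> k < j \<longrightarrow> l < j)}"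

text \<open>Adjacency of the gluing points along the arcs of a and of W(b); the circles of
W(b)a are the connected components.\<close>

definition pt_adj :: "nat \<Rightarrow> (nat \<Rightarrow> nat) \<Rightarrow> (nat \<Rightarrow> nat) \<Rightarrow> nat \<Rightarrow> nat \<Rightarrow> bool" where
  "pt_adj n a b i j \<longleftrightarrow> i < 2*n \<and> (j = a i \<or> j = b i)"

definition circles :: "nat \<Rightarrow> (nat \<Rightarrow> nat) \<Rightarrow> (nat \<Rightarrow> nat) \<Rightarrow> nat set set" where
  "circles n a b = (\<lambda>i. {j. (pt_adj n a b)\<^sup>*\<^sup>* i j}) ` {0..<2*n}"

text \<open>A basis element of $F(W(b)a)=\mathcal{A}^{\otimes k}$ is a choice of $1$ or $X$
for each circle; we encode it as a labelling of the points (True = X, False = 1),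
constant along circles and False outside $\{0..<2n\}$.\<close>

definition lab_ok :: "nat \<Rightarrow> (nat \<Rightarrow> nat) \<Rightarrow> (nat \<Rightarrow> nat) \<Rightarrow> (nat \<Rightarrow> bool) \<Rightarrow> bool" where
  "lab_ok n a b s \<longleftrightarrow> (\<forall>i j. (pt_adj n a b)\<^sup>*\<^sup>* i j \<longrightarrow> s i = s j) \<and> (\<forall>i. 2*n \<le> i \<longrightarrow> \<not> s i)"

definition labs :: "nat \<Rightarrow> (nat \<Rightarrow> nat) \<Rightarrow> (nat \<Rightarrow> nat) \<Rightarrow> (nat \<Rightarrow> bool) set" where
  "labs n a b = {s. lab_ok n a b s}"

text \<open>Basis of $H^n$: triples (b, a, s) standing for the basis element s of
${}_b(H^n)_a = F(W(b)a)\{n\}$.\<close>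

type_synonym hbasis = "(nat \<Rightarrow> nat) \<times> (nat \<Rightarrow> nat) \<times> (nat \<Rightarrow> bool)"

definition basis :: "nat \<Rightarrow> hbasis set" where
  "basis n = {(b, a, s). b \<in> Bn n \<and> a \<in> Bn n \<and> lab_ok n a b s}"

text \<open>Degree: deg 1 = -1, deg X = 1, tensor degrees add, then shift by {n}.\<close>

definition hdeg :: "nat \<Rightarrow> hbasis \<Rightarrow> int" where
  "hdeg n x = (case x of (b, a, s) \<Rightarrow>
     int n + (\<Sum>C\<in>circles n a b. if (\<exists>i\<in>C. s i) then 1 else -1))"

text \<open>Intermediate diagrams: vertices (False,i) are the points between a and W(b),
vertices (True,i) the points between b and W(c). S is the set of endpoints of arcs of b
already contracted by a saddle; for such an arc the two b-arcs are replaced by the two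
vertical strands.\<close>

definition gadj :: "nat \<Rightarrow> (nat \<Rightarrow> nat) \<Rightarrow> (nat \<Rightarrow> nat) \<Rightarrow> (nat \<Rightarrow> nat) \<Rightarrow> nat set
                    \<Rightarrow> bool \<times> nat \<Rightarrow> bool \<times> nat \<Rightarrow> bool" where
  "gadj n a b c S v w \<longleftrightarrow> snd v < 2*n \<and>
     (if fst v then
        w = (True, c (snd v)) \<or> (snd v \<in> S \<and> w = (False, snd v)) \<or> (snd v \<notin> S \<and> w = (True, b (snd v)))
      else
        w = (False, a (snd v)) \<or> (snd v \<in> S \<and> w = (True, snd v)) \<or> (snd v \<notin> S \<and> w = (False, b (snd v))))"

text \<open>Basis labellings of the state space of an intermediate diagram (one tensor factor
of A per circle = connected component).\<close>

definition glab_ok :: "nat \<Rightarrow> (nat \<Rightarrow> nat) \<Rightarrow> (nat \<Rightarrow> nat) \<Rightarrow> (nat \<Rightarrow> nat) \<Rightarrow> nat set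
                       \<Rightarrow> (bool \<times> nat \<Rightarrow> bool) \<Rightarrow> bool" where
  "glab_ok n a b c S m \<longleftrightarrow> (\<forall>v w. (gadj n a b c S)\<^sup>*\<^sup>* v w \<longrightarrow> m v = m w) \<and>
                         (\<forall>l i. 2*n \<le> i \<longrightarrow> \<not> m (l, i))"

text \<open>Matrix coefficient of one saddle (along the arc {i, b i} of b) from basis labelling l
of the diagram with contracted set S to basis labelling m of the diagram with contracted
set S \<union> {i, b i}: multiplication if two circles merge, comultiplication if one circle
splits, identity on all other circles.\<close>

definition saddle_coef :: "nat \<Rightarrow> (nat \<Rightarrow> nat) \<Rightarrow> (nat \<Rightarrow> nat) \<Rightarrow> (nat \<Rightarrow> nat) \<Rightarrow> nat set \<Rightarrow> nat
                          \<Rightarrow> (bool \<times> nat \<Rightarrow> bool) \<Rightarrow> (bool \<times> nat \<Rightarrow> bool) \<Rightarrow> int" where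
  "saddle_coef n a b c S i l m =
    (let j = b i; S' = S \<union> {i, j}; R = (gadj n a b c S)\<^sup>*\<^sup>*; v1 = (False, i); v2 = (True, i) in
     if \<not> glab_ok n a b c S' m then 0
     else if (\<exists>v. \<not> R v1 v \<and> \<not> R v2 v \<and> l v \<noteq> m v) then 0
     else if \<not> R v1 v2 then
       (if l v1 \<and> l v2 then 0 else if m (False, i) = (l v1 \<or> l v2) then 1 else 0)
     else
       (if l v1 then (if m (False, i) \<and> m (False, j) then 1 else 0)
        else (if m (False, i) \<noteq> m (False, j) then 1 else 0)))"

definition saddle_step :: "nat \<Rightarrow> (nat \<Rightarrow> nat) \<Rightarrow> (nat \<Rightarrow> nat) \<Rightarrow> (nat \<Rightarrow> nat) \<Rightarrow> nat set \<Rightarrow> nat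
                          \<Rightarrow> ((bool \<times> nat \<Rightarrow> bool) \<Rightarrow> int) \<Rightarrow> ((bool \<times> nat \<Rightarrow> bool) \<Rightarrow> int)" where
  "saddle_step n a b c S i v =
     (\<lambda>m. \<Sum>l\<in>{l. glab_ok n a b c S l}. v l * saddle_coef n a b c S i l m)"

fun run_saddles :: "nat \<Rightarrow> (nat \<Rightarrow> nat) \<Rightarrow> (nat \<Rightarrow> nat) \<Rightarrow> (nat \<Rightarrow> nat) \<Rightarrow> nat set \<Rightarrow> nat list
                    \<Rightarrow> ((bool \<times> nat \<Rightarrow> bool) \<Rightarrow> int) \<Rightarrow> ((bool \<times> nat \<Rightarrow> bool) \<Rightarrow> int)" where
  "run_saddles n a b c S [] v = v"
| "run_saddles n a b c S (i # is) v =
     run_saddles n a b c (S \<union> {i, b i}) is (saddle_step n a b c S i v)"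

text \<open>The arcs of b, each listed by its left endpoint (order irrelevant for the TQFT map).\<close>

definition arcs :: "nat \<Rightarrow> (nat \<Rightarrow> nat) \<Rightarrow> nat list" where
  "arcs n b = [i \<leftarrow> [0..<2*n]. i < b i]"

text \<open>Coefficient of the basis element r of F(W(c)a) in the image of s \<otimes> t, where s is
a basis element of F(W(c)b) and t of F(W(b)a).\<close>

definition cob :: "nat \<Rightarrow> (nat \<Rightarrow> nat) \<Rightarrow> (nat \<Rightarrow> nat) \<Rightarrow> (nat \<Rightarrow> nat)
                  \<Rightarrow> (nat \<Rightarrow> bool) \<Rightarrow> (nat \<Rightarrow> bool) \<Rightarrow> (nat \<Rightarrow> bool) \<Rightarrow> int" where
  "cob n c b a s t r =
     run_saddles n a b c {} (arcs n b)
       (\<lambda>l. if l = (\<lambda>(up, i). if up then s i else t i) then 1 else 0)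
       (\<lambda>(up, i). r i)"

definition Hn :: "nat \<Rightarrow> (hbasis \<Rightarrow> int) set" where
  "Hn n = {h. \<forall>x. x \<notin> basis n \<longrightarrow> h x = 0}"

definition hmult :: "nat \<Rightarrow> (hbasis \<Rightarrow> int) \<Rightarrow> (hbasis \<Rightarrow> int) \<Rightarrow> (hbasis \<Rightarrow> int)" where
  "hmult n h g = (\<lambda>(c, a, r). if (c, a, r) \<in> basis n then
      (\<Sum>b\<in>Bn n. \<Sum>s\<in>labs n c b. \<Sum>t\<in>labs n b a. h (c, b, s) * g (b, a, t) * cob n c b a s t r)
    else 0)"

text \<open>The unit \<Sum>_a e_a with e_a = 1 \<otimes> ... \<otimes> 1 in {}_a(H^n)_a.\<close>

definition hone :: "nat \<Rightarrow> hbasis \<Rightarrow> int" where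
  "hone n = (\<lambda>(b, a, s). if b = a \<and> a \<in> Bn n \<and> s = (\<lambda>_. False) then 1 else 0)"

definition Z0 :: "nat \<Rightarrow> (hbasis \<Rightarrow> int) set" where
  "Z0 n = {h \<in> Hn n. (\<forall>x. h x \<noteq> 0 \<longrightarrow> hdeg n x = 0) \<and> (\<forall>g\<in>Hn n. hmult n h g = hmult n g h)}"

end

theory Submission
  imports Defs "HOL-Library.FuncSet"
begin

text \<open>A diagram \<open>W(b)a\<close> has at most \<open>n\<close> circles, with equality only if \<open>a = b\<close>; hence
the only basis elements of degree \<open>0\<close> are the idempotents \<open>e\<^sub>a\<close>, and an element of
\<open>Z\<^sub>0(H\<^sup>n)\<close> is a combination \<open>\<Sum>\<^sub>a c(a) e\<^sub>a\<close>. Left multiplication by \<open>e\<^sub>b\<close> is the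
identity on \<open>{}\<^sub>b(H\<^sup>n)\<^sub>a\<close>, since every saddle merges a circle with a small circle
labelled \<open>1\<close>; reflecting all diagrams in a horizontal line is an anti-automorphism of
\<open>H\<^sup>n\<close>, so the same holds on the right. Commuting with the element
\<open>1 \<otimes> \<dots> \<otimes> 1 \<in> {}\<^sub>b(H\<^sup>n)\<^sub>a\<close> then forces \<open>c(a) = c(b)\<close>, so \<open>Z\<^sub>0(H\<^sup>n) = \<int>\<close>, whose
units are \<open>\<plusminus>1\<close>.\<close>

lemma BnD:
  assumes "b \<in> Bn n"
  shows "\<And>i. i < 2*n \<Longrightarrow> b i < 2*n" "\<And>i. i < 2*n \<Longrightarrow> b i \<noteq> i"
    "\<And>i. 2*n \<le> i \<Longrightarrow> b i = i" "\<And>i. b (b i) = i"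
  using assms unfolding Bn_def by (auto, metis not_le)

definition std_matching :: "nat \<Rightarrow> nat \<Rightarrow> nat" where
  "std_matching n i = (if i < 2*n then (if even i then i + 1 else i - 1) else i)"

lemma std_matching_in_Bn: "std_matching n \<in> Bn n"
  unfolding Bn_def std_matching_def by auto presburger+

lemma finite_Bn: "finite (Bn n)"
proof -
  have "Bn n \<subseteq> (\<lambda>g i. if i < 2*n then g i else i) ` (\<Pi>\<^sub>E i\<in>{..<2*n}. {..<2*n})"
  proof
    fix f assume f: "f \<in> Bn n"
    have "restrict f {..<2*n} \<in> (\<Pi>\<^sub>E i\<in>{..<2*n}. {..<2*n})" using BnD(1)[OF f] by auto
    moreover have "f = (\<lambda>i. if i < 2*n then restrict f {..<2*n} i else i)"
      using BnD(3)[OF f] by (auto simp: fun_eq_iff)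
    ultimately show "f \<in> (\<lambda>g i. if i < 2*n then g i else i) ` (\<Pi>\<^sub>E i\<in>{..<2*n}. {..<2*n})"
      by blast
  qed
  then show ?thesis by (rule finite_subset) (auto intro: finite_PiE)
qed

lemma finite_predicates_within: "finite A \<Longrightarrow> finite {P. Collect P \<subseteq> A}"
proof -
  assume "finite A"
  have "{P. Collect P \<subseteq> A} \<subseteq> (\<lambda>X x. x \<in> X) ` Pow A"
  proof
    fix P assume "P \<in> {P. Collect P \<subseteq> A}"
    then show "P \<in> (\<lambda>X x. x \<in> X) ` Pow A" by (intro rev_image_eqI[of "Collect P"]) auto
  qed
  then show ?thesis by (rule finite_subset) (simp add: \<open>finite A\<close>)
qed

lemma sum_eq_single:
  assumes "finite A" "x \<in> A" "\<And>y. y \<in> A \<Longrightarrow> y \<noteq> x \<Longrightarrow> f y = 0"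
  shows "sum f A = f x"
  using assms by (simp add: sum.remove sum.neutral)

lemma finite_labs: "finite (labs n a b)"
  by (rule finite_subset[OF _ finite_predicates_within[of "{..<2*n}"]])
     (auto simp: labs_def lab_ok_def not_less[symmetric])

lemma finite_glab_ok: "finite {m. glab_ok n a b c S m}"
  by (rule finite_subset[OF _ finite_predicates_within[of "UNIV \<times> {..<2*n}"]])
     (auto simp: glab_ok_def not_less[symmetric])

lemma lab_ok_sym: "lab_ok n a b s = lab_ok n b a s"
proof -
  have "pt_adj n a b = pt_adj n b a" by (auto simp: pt_adj_def fun_eq_iff)
  then show ?thesis by (simp add: lab_ok_def)
qed

lemma labs_sym: "labs n a b = labs n b a"
  by (simp add: labs_def lab_ok_sym)

lemma basis_sym: "(b, a, s) \<in> basis n \<longleftrightarrow> (a, b, s) \<in> basis n"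
  by (auto simp: basis_def lab_ok_sym)

lemma lab_ok_adj:
  assumes "lab_ok n a b t" "k < 2*n"
  shows "t (a k) = t k" "t (b k) = t k"
  using assms unfolding lab_ok_def by (metis pt_adj_def r_into_rtranclp)+

lemma lab_ok_outside: "lab_ok n a b t \<Longrightarrow> 2*n \<le> i \<Longrightarrow> \<not> t i"
  by (simp add: lab_ok_def)

section \<open>Circles of \<open>W(b)a\<close> and the degree\<close>

context
  fixes n a b
  assumes a: "a \<in> Bn n" and b: "b \<in> Bn n"
begin

lemma symp_pt_reach: "symp (pt_adj n a b)\<^sup>*\<^sup>*"
  by (rule symp_rtranclp, rule sympI) (auto simp: pt_adj_def BnD[OF a] BnD[OF b])

lemma pt_reach_bound: "(pt_adj n a b)\<^sup>*\<^sup>* i j \<Longrightarrow> i < 2*n \<Longrightarrow> j < 2*n"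
  by (induction rule: rtranclp_induct) (auto simp: pt_adj_def BnD[OF a] BnD[OF b])

lemma circles_disjoint: "pairwise disjnt (circles n a b)"
proof (rule pairwiseI)
  fix C D assume "C \<in> circles n a b" "D \<in> circles n a b" "C \<noteq> D"
  then obtain i j where C: "C = {k. (pt_adj n a b)\<^sup>*\<^sup>* i k}" and D: "D = {k. (pt_adj n a b)\<^sup>*\<^sup>* j k}"
    by (auto simp: circles_def)
  show "disjnt C D"
  proof (rule ccontr)
    assume "\<not> disjnt C D"
    then have "(pt_adj n a b)\<^sup>*\<^sup>* i j"
      using C D symp_pt_reach by (auto simp: disjnt_def dest: sympD intro: rtranclp_trans)
    then have "C = D"
      using C D symp_pt_reach by (auto dest: sympD intro: rtranclp_trans)
    with \<open>C \<noteq> D\<close> show False ..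
  qed
qed

lemma Union_circles: "\<Union>(circles n a b) = {0..<2*n}"
  using pt_reach_bound by (auto simp: circles_def)

lemma circle_contains_arcs:
  "i < 2*n \<Longrightarrow> {i, a i, b i} \<subseteq> {j. (pt_adj n a b)\<^sup>*\<^sup>* i j}"
  by (auto simp: pt_adj_def)

lemma finite_circle: "C \<in> circles n a b \<Longrightarrow> finite C"
  using Union_circles by (metis Sup_upper finite_atLeastLessThan finite_subset)

lemma circle_card_ge_2: "C \<in> circles n a b \<Longrightarrow> 2 \<le> card C"
proof -
  assume "C \<in> circles n a b"
  then obtain i where i: "i < 2*n" and C: "C = {j. (pt_adj n a b)\<^sup>*\<^sup>* i j}"
    by (auto simp: circles_def)
  have "2 = card {i, a i}" using BnD(2)[OF a i] by simp
  also have "\<dots> \<le> card C"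
    using circle_contains_arcs[OF i] finite_circle \<open>C \<in> circles n a b\<close> C by (intro card_mono) auto
  finally show ?thesis .
qed

lemma sum_card_circles: "(\<Sum>C\<in>circles n a b. card C) = 2*n"
proof -
  have "card (\<Union>(circles n a b)) = (\<Sum>C\<in>circles n a b. card C)"
    using circles_disjoint finite_circle by (intro card_Union_disjoint) auto
  then show ?thesis by (simp add: Union_circles)
qed

lemma card_circles_le: "card (circles n a b) \<le> n"
proof -
  have "(\<Sum>C\<in>circles n a b. 2) \<le> (\<Sum>C\<in>circles n a b. card C)"
    using circle_card_ge_2 by (intro sum_mono) auto
  then show ?thesis by (simp add: sum_card_circles)
qed

lemma circles_card_2_iff: "(\<forall>C\<in>circles n a b. card C = 2) \<longleftrightarrow> a = b"
proof
  assume two: "\<forall>C\<in>circles n a b. card C = 2"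
  show "a = b"
  proof
    fix i show "a i = b i"
    proof (cases "i < 2*n")
      case True
      let ?C = "{j. (pt_adj n a b)\<^sup>*\<^sup>* i j}"
      have C: "?C \<in> circles n a b" using True by (auto simp: circles_def)
      have "{i, a i} = ?C"
        using circle_contains_arcs[OF True] finite_circle[OF C] two C BnD(2)[OF a True]
        by (intro card_subset_eq) auto
      then have "b i \<in> {i, a i}" using circle_contains_arcs[OF True] by auto
      then show ?thesis using BnD(2)[OF b True] by auto
    qed (simp add: BnD(3)[OF a] BnD(3)[OF b])
  qed
next
  assume "a = b"
  have circle: "{j. (pt_adj n a b)\<^sup>*\<^sup>* i j} = {i, a i}" if "i < 2*n" for i
  proof
    have "(pt_adj n a b)\<^sup>*\<^sup>* i j \<Longrightarrow> j \<in> {i, a i}" for j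
      by (induction rule: rtranclp_induct) (auto simp: pt_adj_def BnD(4)[OF b] \<open>a = b\<close>)
    then show "{j. (pt_adj n a b)\<^sup>*\<^sup>* i j} \<subseteq> {i, a i}" by blast
  qed (use circle_contains_arcs[OF that] in auto)
  show "\<forall>C\<in>circles n a b. card C = 2"
  proof
    fix C assume "C \<in> circles n a b"
    then obtain i where "i < 2*n" "C = {j. (pt_adj n a b)\<^sup>*\<^sup>* i j}"
      by (auto simp: circles_def)
    then show "card C = 2" using circle BnD(2)[OF a, of i] by simp
  qed
qed

lemma card_circles_eq_iff: "card (circles n a b) = n \<longleftrightarrow> a = b"
proof -
  have "(\<Sum>C\<in>circles n a b. card C - 2) = (\<Sum>C\<in>circles n a b. card C) - (\<Sum>C\<in>circles n a b. 2)"
    using circle_card_ge_2 by (intro sum_subtractf_nat) auto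
  then have "(\<Sum>C\<in>circles n a b. card C - 2) = 2*n - 2 * card (circles n a b)"
    by (simp add: sum_card_circles)
  moreover have "finite (circles n a b)" by (simp add: circles_def)
  ultimately have "card (circles n a b) = n \<longleftrightarrow> (\<forall>C\<in>circles n a b. card C - 2 = 0)"
    using card_circles_le by auto
  also have "\<dots> \<longleftrightarrow> (\<forall>C\<in>circles n a b. card C = 2)"
    using circle_card_ge_2 by (auto simp: le_antisym)
  finally show ?thesis by (simp add: circles_card_2_iff)
qed

end

lemma hdeg_eq_0_imp_idempotent:
  assumes a: "a \<in> Bn n" and b: "b \<in> Bn n" and s: "lab_ok n a b s"
    and deg: "hdeg n (b, a, s) = 0"
  shows "a = b \<and> s = (\<lambda>_. False)"
proof -
  let ?f = "\<lambda>C. if \<exists>i\<in>C. s i then 1 else -1 :: int"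
  have fin: "finite (circles n a b)" by (simp add: circles_def)
  have "(\<Sum>C\<in>circles n a b. ?f C + 1) = int (card (circles n a b)) - int n"
    using deg by (simp add: hdeg_def sum.distrib)
  also have "\<dots> \<le> 0" using card_circles_le[OF a b] by simp
  finally have "(\<Sum>C\<in>circles n a b. ?f C + 1) \<le> 0" .
  moreover have "0 \<le> (\<Sum>C\<in>circles n a b. ?f C + 1)" by (rule sum_nonneg) simp
  ultimately have "\<forall>C\<in>circles n a b. ?f C + 1 = 0"
    using sum_nonneg_eq_0_iff[OF fin, of "\<lambda>C. ?f C + 1"] by simp
  then have all_one: "\<forall>C\<in>circles n a b. \<not> (\<exists>i\<in>C. s i)" by (auto split: if_splits)
  then have "(\<Sum>C\<in>circles n a b. ?f C) = - int (card (circles n a b))" by simp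
  then have "a = b" using deg card_circles_eq_iff[OF a b] by (simp add: hdeg_def)
  moreover have "s = (\<lambda>_. False)"
  proof
    fix i show "s i = False"
      using all_one lab_ok_outside[OF s, of i] by (cases "i < 2*n") (auto simp: circles_def)
  qed
  ultimately show ?thesis ..
qed

lemma hdeg_idempotent: "a \<in> Bn n \<Longrightarrow> hdeg n (a, a, (\<lambda>_. False)) = 0"
  using card_circles_eq_iff[of a n a] by (simp add: hdeg_def)

section \<open>Mirror symmetry of the multiplication\<close>

lemma rtranclp_conjugate:
  assumes f: "\<And>x. f (f x) = x"
  shows "(\<lambda>v w. r (f v) (f w))\<^sup>*\<^sup>* x y \<longleftrightarrow> r\<^sup>*\<^sup>* (f x) (f y)"
proof
  show "(\<lambda>v w. r (f v) (f w))\<^sup>*\<^sup>* x y \<Longrightarrow> r\<^sup>*\<^sup>* (f x) (f y)"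
    by (induction rule: rtranclp_induct) (auto intro: rtranclp.rtrancl_into_rtrancl)
  have "r\<^sup>*\<^sup>* u w \<Longrightarrow> (\<lambda>v w. r (f v) (f w))\<^sup>*\<^sup>* (f u) (f w)" for u w
    by (induction rule: rtranclp_induct) (auto simp: f intro: rtranclp.rtrancl_into_rtrancl)
  then show "r\<^sup>*\<^sup>* (f x) (f y) \<Longrightarrow> (\<lambda>v w. r (f v) (f w))\<^sup>*\<^sup>* x y" by (metis f)
qed

text \<open>Swapping the two levels of the intermediate diagrams turns the saddle cobordism
\<open>W(c)b W(b)a \<rightarrow> W(c)a\<close> into its reflection \<open>W(a)b W(b)c \<rightarrow> W(a)c\<close>.\<close>

abbreviation mirror :: "bool \<times> nat \<Rightarrow> bool \<times> nat" where
  "mirror \<equiv> apfst Not"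

lemma mirror_mirror [simp]: "mirror (mirror v) = v"
  by (cases v) simp

lemma gadj_mirror: "gadj n c b a S v w = gadj n a b c S (mirror v) (mirror w)"
  by (cases v; cases w) (auto simp: gadj_def)

lemma gadj_reach_mirror:
  "(gadj n c b a S)\<^sup>*\<^sup>* v w \<longleftrightarrow> (gadj n a b c S)\<^sup>*\<^sup>* (mirror v) (mirror w)"
proof -
  have "gadj n c b a S = (\<lambda>v w. gadj n a b c S (mirror v) (mirror w))"
    by (intro ext) (rule gadj_mirror)
  then show ?thesis using rtranclp_conjugate[of mirror] by simp
qed

lemma glab_ok_mirror: "glab_ok n c b a S (m \<circ> mirror) \<longleftrightarrow> glab_ok n a b c S m"
proof -
  have "(\<forall>v w. R (mirror v) (mirror w) \<longrightarrow> m (mirror v) = m (mirror w)) \<longleftrightarrow>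
        (\<forall>v w. R v w \<longrightarrow> m v = m w)" for R :: "bool \<times> nat \<Rightarrow> bool \<times> nat \<Rightarrow> bool"
    by (metis mirror_mirror)
  moreover have "(\<forall>l i. 2*n \<le> i \<longrightarrow> \<not> m (\<not> l, i)) \<longleftrightarrow> (\<forall>l i. 2*n \<le> i \<longrightarrow> \<not> m (l, i))"
    by (auto simp: all_bool_eq)
  ultimately show ?thesis by (simp add: glab_ok_def gadj_reach_mirror[of n c b a])
qed

lemma symp_gadj_reach:
  assumes "a \<in> Bn n" "b \<in> Bn n" "c \<in> Bn n" "\<forall>k\<in>S. b k \<in> S"
  shows "symp (gadj n a b c S)\<^sup>*\<^sup>*"
  by (rule symp_rtranclp, rule sympI)
     (use assms in \<open>auto simp: gadj_def BnD split: if_splits\<close>)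

lemma saddle_coef_mirror:
  assumes a: "a \<in> Bn n" and b: "b \<in> Bn n" and c: "c \<in> Bn n" and S: "\<forall>k\<in>S. b k \<in> S"
    and i: "i < 2*n" and l: "glab_ok n a b c S l"
  shows "saddle_coef n c b a S i (l \<circ> mirror) (m \<circ> mirror) = saddle_coef n a b c S i l m"
proof -
  let ?R = "(gadj n a b c S)\<^sup>*\<^sup>*" and ?R' = "(gadj n c b a S)\<^sup>*\<^sup>*"
  let ?v1 = "(False, i)" and ?v2 = "(True, i)"
  have off: "(\<exists>v. \<not> ?R' ?v1 v \<and> \<not> ?R' ?v2 v \<and> (l \<circ> mirror) v \<noteq> (m \<circ> mirror) v)
      \<longleftrightarrow> (\<exists>v. \<not> ?R ?v1 v \<and> \<not> ?R ?v2 v \<and> l v \<noteq> m v)"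
  proof -
    have "(\<exists>v. P (mirror v)) \<longleftrightarrow> (\<exists>v. P v)" for P by (metis mirror_mirror)
    from this[of "\<lambda>v. \<not> ?R ?v1 v \<and> \<not> ?R ?v2 v \<and> l v \<noteq> m v"] show ?thesis
      by (simp add: gadj_reach_mirror[of n c b a] conj_left_commute)
  qed
  have conn: "?R' ?v1 ?v2 \<longleftrightarrow> ?R ?v1 ?v2"
    using symp_gadj_reach[OF a b c S] by (auto simp: gadj_reach_mirror[of n c b a] dest: sympD)
  have l_conn: "l ?v1 = l ?v2" if "?R ?v1 ?v2" using l that by (simp add: glab_ok_def)
  show ?thesis
  proof (cases "glab_ok n a b c (S \<union> {i, b i}) m")
    case True
    have "gadj n a b c (S \<union> {i, b i}) (False, k) (True, k)" if "k \<in> {i, b i}" for k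
      using that i BnD(1)[OF b i] by (auto simp: gadj_def)
    then have "m (True, i) = m (False, i)" "m (True, b i) = m (False, b i)"
      using True unfolding glab_ok_def by (metis insertI1 insertI2 r_into_rtranclp singletonI)+
    then show ?thesis
      using True off conn l_conn glab_ok_mirror
      unfolding saddle_coef_def Let_def by auto
  qed (simp add: saddle_coef_def glab_ok_mirror)
qed

lemma comp_mirror_mirror [simp]: "f \<circ> mirror \<circ> mirror = f"
  by (simp add: fun_eq_iff)

definition mirror_vec :: "((bool \<times> nat \<Rightarrow> bool) \<Rightarrow> int) \<Rightarrow> (bool \<times> nat \<Rightarrow> bool) \<Rightarrow> int" where
  "mirror_vec v = (\<lambda>l. v (l \<circ> mirror))"

definition basis_vec :: "(bool \<times> nat \<Rightarrow> bool) \<Rightarrow> (bool \<times> nat \<Rightarrow> bool) \<Rightarrow> int" where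
  "basis_vec X = (\<lambda>l. if l = X then 1 else 0)"

lemma mirror_vec_basis_vec: "mirror_vec (basis_vec X) = basis_vec (X \<circ> mirror)"
proof -
  have "l \<circ> mirror = X \<longleftrightarrow> l = X \<circ> mirror" for l
    by (metis comp_mirror_mirror)
  then show ?thesis by (simp add: mirror_vec_def basis_vec_def)
qed

definition stack :: "(nat \<Rightarrow> bool) \<Rightarrow> (nat \<Rightarrow> bool) \<Rightarrow> bool \<times> nat \<Rightarrow> bool" where
  "stack s t = (\<lambda>(up, i). if up then s i else t i)"

lemma stack_mirror: "stack s t \<circ> mirror = stack t s"
  by (auto simp: stack_def)

lemma cob_eq_run_saddles:
  "cob n c b a s t r = run_saddles n a b c {} (arcs n b) (basis_vec (stack s t)) (stack r r)"
proof -
  have "(\<lambda>(up, i). r i) = stack r r" by (auto simp: stack_def)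
  then show ?thesis by (simp add: cob_def basis_vec_def stack_def)
qed

lemma saddle_step_mirror:
  assumes "a \<in> Bn n" "b \<in> Bn n" "c \<in> Bn n" "\<forall>k\<in>S. b k \<in> S" "i < 2*n"
  shows "saddle_step n c b a S i (mirror_vec v) = mirror_vec (saddle_step n a b c S i v)"
proof
  fix m
  have "saddle_step n c b a S i (mirror_vec v) m
      = (\<Sum>l\<in>{l. glab_ok n a b c S l}. v l * saddle_coef n c b a S i (l \<circ> mirror) m)"
    unfolding saddle_step_def mirror_vec_def
    by (rule sum.reindex_bij_witness[where i = "\<lambda>l. l \<circ> mirror" and j = "\<lambda>l. l \<circ> mirror"])
       (auto simp: glab_ok_mirror[of n a b c] glab_ok_mirror[of n c b a])
  also have "\<dots> = (\<Sum>l\<in>{l. glab_ok n a b c S l}. v l * saddle_coef n a b c S i l (m \<circ> mirror))"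
  proof (rule sum.cong[OF refl])
    fix l assume "l \<in> {l. glab_ok n a b c S l}"
    then have "saddle_coef n c b a S i (l \<circ> mirror) (m \<circ> mirror \<circ> mirror)
        = saddle_coef n a b c S i l (m \<circ> mirror)"
      by (intro saddle_coef_mirror[OF assms]) simp
    then show "v l * saddle_coef n c b a S i (l \<circ> mirror) m = v l * saddle_coef n a b c S i l (m \<circ> mirror)"
      by (simp only: comp_mirror_mirror)
  qed
  finally show "saddle_step n c b a S i (mirror_vec v) m = mirror_vec (saddle_step n a b c S i v) m"
    by (simp add: saddle_step_def mirror_vec_def)
qed

lemma run_saddles_mirror:
  assumes a: "a \<in> Bn n" and b: "b \<in> Bn n" and c: "c \<in> Bn n"
  shows "\<forall>k\<in>S. b k \<in> S \<Longrightarrow> \<forall>i\<in>set is. i < 2*n \<Longrightarrow>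
    run_saddles n c b a S is (mirror_vec v) = mirror_vec (run_saddles n a b c S is v)"
proof (induction "is" arbitrary: S v)
  case (Cons i "is")
  have S': "\<forall>k\<in>S \<union> {i, b i}. b k \<in> S \<union> {i, b i}" using Cons.prems(1) BnD(4)[OF b] by auto
  have "run_saddles n c b a S (i # is) (mirror_vec v)
      = run_saddles n c b a (S \<union> {i, b i}) is (mirror_vec (saddle_step n a b c S i v))"
    using saddle_step_mirror[OF a b c Cons.prems(1)] Cons.prems(2) by simp
  also have "\<dots> = mirror_vec (run_saddles n a b c S (i # is) v)"
    using Cons.IH[OF S'] Cons.prems(2) by simp
  finally show ?case .
qed simp

theorem cob_mirror:
  assumes "a \<in> Bn n" "b \<in> Bn n" "c \<in> Bn n"
  shows "cob n a b c t s r = cob n c b a s t r"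
proof -
  have arcs: "\<forall>i\<in>set (arcs n b). i < 2*n" by (simp add: arcs_def)
  have "cob n a b c t s r = run_saddles n c b a {} (arcs n b) (mirror_vec (basis_vec (stack s t))) (stack r r)"
    by (simp add: cob_eq_run_saddles mirror_vec_basis_vec stack_mirror)
  also have "\<dots> = run_saddles n a b c {} (arcs n b) (basis_vec (stack s t)) (stack r r \<circ> mirror)"
    using run_saddles_mirror[OF assms _ arcs] by (simp add: mirror_vec_def)
  also have "\<dots> = cob n c b a s t r"
    by (simp add: cob_eq_run_saddles stack_mirror)
  finally show ?thesis .
qed

section \<open>The idempotents \<open>e\<^sub>a\<close> act as identities\<close>

lemma saddle_step_basis_vec:
  assumes "glab_ok n a b c S X"
  shows "saddle_step n a b c S i (basis_vec X) = saddle_coef n a b c S i X"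
proof
  fix m
  have "saddle_step n a b c S i (basis_vec X) m
      = (\<Sum>l\<in>{l. glab_ok n a b c S l}. if l = X then saddle_coef n a b c S i l m else 0)"
    unfolding saddle_step_def basis_vec_def by (intro sum.cong) auto
  also have "\<dots> = saddle_coef n a b c S i X m"
    using assms finite_glab_ok by (simp add: sum.delta')
  finally show "saddle_step n a b c S i (basis_vec X) m = saddle_coef n a b c S i X m" .
qed

lemma glab_okI:
  assumes "\<And>v w. gadj n a b c S v w \<Longrightarrow> m v = m w" "\<And>l i. 2*n \<le> i \<Longrightarrow> \<not> m (l, i)"
  shows "glab_ok n a b c S m"
proof -
  have "(gadj n a b c S)\<^sup>*\<^sup>* v w \<Longrightarrow> m v = m w" for v w
    by (induction rule: rtranclp_induct) (auto dest: assms(1))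
  then show ?thesis using assms(2) by (auto simp: glab_ok_def)
qed

lemma glab_okD: "glab_ok n a b c S m \<Longrightarrow> (gadj n a b c S)\<^sup>*\<^sup>* v w \<Longrightarrow> m v = m w"
  unfolding glab_ok_def by blast

text \<open>In the diagram of \<open>W(b) b W(b) a\<close> with the arcs \<open>S\<close> already contracted, the label
\<open>t\<close> of \<open>W(b)a\<close> is carried along the contracted strands, while each circle formed by an
uncontracted arc of \<open>b\<close> and its mirror image is still labelled \<open>1\<close>.\<close>

abbreviation unit_lab :: "nat set \<Rightarrow> (nat \<Rightarrow> bool) \<Rightarrow> bool \<times> nat \<Rightarrow> bool" where
  "unit_lab S t \<equiv> stack (\<lambda>k. k \<in> S \<and> t k) t"

lemma glab_ok_unit_lab:
  assumes b: "b \<in> Bn n" and t: "lab_ok n a b t" and S: "\<forall>k\<in>S. b k \<in> S"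
  shows "glab_ok n a b b S (unit_lab S t)"
proof (rule glab_okI)
  fix v w assume e: "gadj n a b b S v w"
  obtain u k where v: "v = (u, k)" by (cases v)
  have k: "k < 2*n" using e v by (simp add: gadj_def)
  have "b k \<in> S \<longleftrightarrow> k \<in> S" using S BnD(4)[OF b, of k] by metis
  then show "unit_lab S t v = unit_lab S t w"
    using e v lab_ok_adj[OF t k] by (cases u) (auto simp: gadj_def stack_def)
qed (use lab_ok_outside[OF t] in \<open>simp add: stack_def\<close>)

context
  fixes n a b t S i
  assumes b: "b \<in> Bn n" and t: "lab_ok n a b t" and S: "\<forall>k\<in>S. b k \<in> S"
    and i: "i < 2*n" and i_new: "i \<notin> S"
begin

private abbreviation "circ \<equiv> {(True, i), (True, b i)}"
private abbreviation "S' \<equiv> S \<union> {i, b i}"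

private lemma b_i: "b i < 2*n" "b i \<notin> S" "b i \<noteq> i"
  using BnD[OF b] i i_new S by metis+

lemma unit_circle_isolated:
  assumes "(gadj n a b b S)\<^sup>*\<^sup>* x y"
  shows "x \<in> circ \<longleftrightarrow> y \<in> circ"
proof -
  have "x \<in> circ \<longleftrightarrow> y \<in> circ" if e: "gadj n a b b S x y" for x y
  proof -
    obtain u k where x: "x = (u, k)" by (cases x)
    show ?thesis using e x i_new b_i BnD(4)[OF b] by (cases u) (auto simp: gadj_def, metis+)
  qed
  with assms show ?thesis by (induction rule: rtranclp_induct) auto
qed

lemma reach_after_unit_saddle:
  assumes "(gadj n a b b S)\<^sup>*\<^sup>* x y" and "x \<notin> circ"
  shows "(gadj n a b b S')\<^sup>*\<^sup>* x y"
  using assms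
proof (induction rule: rtranclp_induct)
  case (step y z)
  have "y \<notin> circ" "z \<notin> circ"
    using unit_circle_isolated step.hyps step.prems by (blast intro: r_into_rtranclp)+
  obtain u k where y: "y = (u, k)" by (cases y)
  have k: "k < 2*n" using step.hyps(2) y by (simp add: gadj_def)
  have "(gadj n a b b S')\<^sup>*\<^sup>* y z"
  proof (cases "gadj n a b b S' y z")
    case False
    \<comment> \<open>the strand of \<open>a\<close> now runs up one side of the contracted arc and down the other\<close>
    then have "u = False" "k \<in> {i, b i}" "z = (False, b k)"
      using step.hyps(2) y \<open>y \<notin> circ\<close> \<open>z \<notin> circ\<close> by (cases u; auto simp: gadj_def)+
    moreover have "b k \<in> S'" "b k < 2*n" using \<open>k \<in> {i, b i}\<close> BnD(4)[OF b] b_i i by auto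
    ultimately have "gadj n a b b S' (False, k) (True, k)" "gadj n a b b S' (True, k) (True, b k)"
      "gadj n a b b S' (True, b k) (False, b k)"
      using k by (auto simp: gadj_def)
    then show ?thesis using y \<open>u = False\<close> \<open>z = (False, b k)\<close>
      by (meson converse_rtranclp_into_rtranclp r_into_rtranclp)
  qed blast
  with step.IH step.prems show ?case by (meson rtranclp_trans)
qed simp

private lemma S'_closed: "\<forall>k\<in>S'. b k \<in> S'"
  using S BnD(4)[OF b] by auto

private lemma circ_reach: "v \<in> circ \<Longrightarrow> (gadj n a b b S')\<^sup>*\<^sup>* (False, i) v"
proof -
  have "gadj n a b b S' (False, i) (True, i)" "gadj n a b b S' (True, i) (True, b i)"
    using i by (auto simp: gadj_def)
  then show "v \<in> circ \<Longrightarrow> (gadj n a b b S')\<^sup>*\<^sup>* (False, i) v"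
    by (auto intro: converse_rtranclp_into_rtranclp)
qed

private lemma unit_lab_off_circ: "v \<notin> circ \<Longrightarrow> unit_lab S t v = unit_lab S' t v"
  by (cases v) (auto simp: stack_def)

private lemma small_circle: "(gadj n a b b S)\<^sup>*\<^sup>* (True, i) (True, b i)"
  using i i_new by (auto simp: gadj_def)

lemma unit_saddle_result_unique:
  assumes m: "glab_ok n a b b S' m"
    and agree: "\<forall>v. \<not> (gadj n a b b S)\<^sup>*\<^sup>* (False, i) v \<and> \<not> (gadj n a b b S)\<^sup>*\<^sup>* (True, i) v
      \<longrightarrow> unit_lab S t v = m v"
    and m_i: "m (False, i) = t i"
  shows "m = unit_lab S' t"
proof
  fix v
  let ?R = "(gadj n a b b S)\<^sup>*\<^sup>*"
  consider "v \<in> circ" | "v \<notin> circ" "?R (False, i) v" | "v \<notin> circ" "\<not> ?R (False, i) v"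
    by blast
  then show "m v = unit_lab S' t v"
  proof cases
    case 1
    have "m v = m (False, i)" using glab_okD[OF m circ_reach[OF 1]] by simp
    moreover have "unit_lab S' t v = t i" using 1 lab_ok_adj[OF t i] by (auto simp: stack_def)
    ultimately show ?thesis using m_i by simp
  next
    case 2
    then have "m v = m (False, i)" using glab_okD[OF m reach_after_unit_saddle] by simp
    moreover have "unit_lab S t v = unit_lab S t (False, i)"
      using glab_okD[OF glab_ok_unit_lab[OF b t S] \<open>?R (False, i) v\<close>] by simp
    ultimately show ?thesis using m_i unit_lab_off_circ[OF \<open>v \<notin> circ\<close>] by (simp add: stack_def)
  next
    case 3
    moreover have "\<not> ?R (True, i) v" using 3 unit_circle_isolated by blast
    ultimately have "unit_lab S t v = m v" using agree by blast
    then show ?thesis using unit_lab_off_circ[OF \<open>v \<notin> circ\<close>] by simp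
  qed
qed

lemma saddle_coef_unit_lab:
  "saddle_coef n a b b S i (unit_lab S t) m = basis_vec (unit_lab S' t) m"
proof -
  let ?R = "(gadj n a b b S)\<^sup>*\<^sup>*" and ?L = "unit_lab S t" and ?L' = "unit_lab S' t"
  have not_merged: "\<not> ?R (False, i) (True, i)" using unit_circle_isolated by blast
  have "?L (False, i) = t i" "\<not> ?L (True, i)" using i_new by (auto simp: stack_def)
  then have coef: "saddle_coef n a b b S i ?L m = (if glab_ok n a b b S' m
      \<and> (\<forall>v. \<not> ?R (False, i) v \<and> \<not> ?R (True, i) v \<longrightarrow> ?L v = m v) \<and> m (False, i) = t i then 1 else 0)"
    using not_merged unfolding saddle_coef_def Let_def by (auto simp del: Un_insert_right)
  show ?thesis
  proof (cases "m = ?L'")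
    case True
    have "?L v = ?L' v" if "\<not> ?R (True, i) v" for v
    proof -
      have "v \<notin> circ" using that small_circle by auto
      then show ?thesis by (rule unit_lab_off_circ)
    qed
    moreover have "?L' (False, i) = t i" by (simp add: stack_def)
    ultimately show ?thesis
      using True coef glab_ok_unit_lab[OF b t S'_closed] by (simp add: basis_vec_def)
  next
    case False
    then show ?thesis using coef unit_saddle_result_unique by (auto simp: basis_vec_def)
  qed
qed

lemma saddle_step_unit_lab:
  "saddle_step n a b b S i (basis_vec (unit_lab S t)) = basis_vec (unit_lab S' t)"
  using saddle_step_basis_vec[OF glab_ok_unit_lab[OF b t S]] saddle_coef_unit_lab by auto

end

lemma run_saddles_unit_lab:
  assumes b: "b \<in> Bn n" and t: "lab_ok n a b t"
  shows "\<forall>k\<in>S. b k \<in> S \<Longrightarrow> \<forall>j\<in>set is. j < 2*n \<and> j < b j \<and> j \<notin> S \<Longrightarrow> distinct is \<Longrightarrow>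
    run_saddles n a b b S is (basis_vec (unit_lab S t))
      = basis_vec (unit_lab (S \<union> (\<Union>j\<in>set is. {j, b j})) t)"
proof (induction "is" arbitrary: S)
  case (Cons i "is")
  have S': "\<forall>k\<in>S \<union> {i, b i}. b k \<in> S \<union> {i, b i}" using Cons.prems(1) BnD(4)[OF b] by auto
  have "j \<notin> {i, b i}" if "j \<in> set is" for j
    using that Cons.prems(2,3) BnD(4)[OF b, of i] by auto
  then have "\<forall>j\<in>set is. j < 2*n \<and> j < b j \<and> j \<notin> S \<union> {i, b i}" using Cons.prems(2) by auto
  then have "run_saddles n a b b (S \<union> {i, b i}) is (basis_vec (unit_lab (S \<union> {i, b i}) t))
      = basis_vec (unit_lab (S \<union> {i, b i} \<union> (\<Union>j\<in>set is. {j, b j})) t)"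
    using Cons.IH[OF S'] Cons.prems(3) by simp
  then show ?case
    using saddle_step_unit_lab[OF b t Cons.prems(1)] Cons.prems(2) by (simp add: Un_assoc)
qed simp

lemma arcs_distinct: "distinct (arcs n b)"
  by (simp add: arcs_def)

lemma arcs_left_ends: "j \<in> set (arcs n b) \<Longrightarrow> j < 2*n \<and> j < b j"
  by (simp add: arcs_def)

lemma arcs_cover:
  assumes b: "b \<in> Bn n"
  shows "(\<Union>j\<in>set (arcs n b). {j, b j}) = {..<2*n}"
proof
  show "(\<Union>j\<in>set (arcs n b). {j, b j}) \<subseteq> {..<2*n}" using BnD(1)[OF b] by (auto simp: arcs_def)
  show "{..<2*n} \<subseteq> (\<Union>j\<in>set (arcs n b). {j, b j})"
  proof
    fix k assume k: "k \<in> {..<2*n}"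
    show "k \<in> (\<Union>j\<in>set (arcs n b). {j, b j})"
    proof (cases "k < b k")
      case False
      then have "b k < k" using BnD(2)[OF b, of k] k by auto
      then have "b k \<in> set (arcs n b)" using BnD(1,4)[OF b] k by (simp add: arcs_def)
      then show ?thesis using BnD(4)[OF b, of k] by (intro UN_I[of "b k"]) auto
    qed (use k in \<open>auto simp: arcs_def\<close>)
  qed
qed

theorem cob_left_unit:
  assumes b: "b \<in> Bn n" and t: "lab_ok n a b t"
  shows "cob n b b a (\<lambda>_. False) t r = (if r = t then 1 else 0)"
proof -
  have "unit_lab {} t = stack (\<lambda>_. False) t" by simp
  moreover have "unit_lab {..<2*n} t = stack t t"
    using lab_ok_outside[OF t] by (metis lessThan_iff not_less)
  ultimately have "cob n b b a (\<lambda>_. False) t r = basis_vec (stack t t) (stack r r)"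
    using run_saddles_unit_lab[OF b t, of "{}" "arcs n b"] arcs_cover[OF b]
      arcs_distinct arcs_left_ends
    by (simp add: cob_eq_run_saddles)
  also have "\<dots> = (if r = t then 1 else 0)"
    by (auto simp: basis_vec_def stack_def fun_eq_iff)
  finally show ?thesis .
qed

section \<open>Transposition and the degree-zero centre\<close>

definition htrans :: "(hbasis \<Rightarrow> int) \<Rightarrow> hbasis \<Rightarrow> int" where
  "htrans h = (\<lambda>(b, a, s). h (a, b, s))"

lemma htrans_htrans [simp]: "htrans (htrans h) = h"
  by (simp add: htrans_def fun_eq_iff)

lemma htrans_Hn: "h \<in> Hn n \<Longrightarrow> htrans h \<in> Hn n"
  by (auto simp: Hn_def htrans_def basis_sym)

theorem htrans_hmult: "htrans (hmult n h g) = hmult n (htrans g) (htrans h)"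
proof (intro ext, clarify)
  fix c a r
  show "htrans (hmult n h g) (c, a, r) = hmult n (htrans g) (htrans h) (c, a, r)"
  proof (cases "(c, a, r) \<in> basis n")
    case True
    then have a: "a \<in> Bn n" and c: "c \<in> Bn n" and acr: "(a, c, r) \<in> basis n"
      using basis_sym by (auto simp: basis_def)
    have "(\<Sum>s\<in>labs n c b. \<Sum>t\<in>labs n b a. g (b, c, s) * h (a, b, t) * cob n c b a s t r)
        = (\<Sum>t\<in>labs n a b. \<Sum>s\<in>labs n b c. h (a, b, t) * g (b, c, s) * cob n a b c t s r)"
      if b: "b \<in> Bn n" for b
      using cob_mirror[OF a b c]
      by (subst sum.swap) (simp add: labs_sym[of n b a] labs_sym[of n c b] ac_simps)
    then show ?thesis using True acr by (simp add: hmult_def htrans_def)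
  next
    case False
    then show ?thesis by (simp add: hmult_def htrans_def basis_sym[of c])
  qed
qed

text \<open>\<open>hdiag n c\<close> is \<open>\<Sum>\<^sub>a c(a) e\<^sub>a\<close>.\<close>

definition hdiag :: "nat \<Rightarrow> ((nat \<Rightarrow> nat) \<Rightarrow> int) \<Rightarrow> hbasis \<Rightarrow> int" where
  "hdiag n c = (\<lambda>(b, a, s). if b = a \<and> a \<in> Bn n \<and> s = (\<lambda>_. False) then c a else 0)"

lemma hdiag_Hn: "hdiag n c \<in> Hn n"
  by (auto simp: Hn_def hdiag_def basis_def lab_ok_def)

lemma htrans_hdiag: "htrans (hdiag n c) = hdiag n c"
  by (intro ext, clarify) (auto simp: htrans_def hdiag_def)

lemma hone_eq_hdiag: "hone n = hdiag n (\<lambda>_. 1)"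
  by (auto simp: hone_def hdiag_def fun_eq_iff)

lemma hmult_hdiag_left:
  assumes g: "g \<in> Hn n"
  shows "hmult n (hdiag n c) g = (\<lambda>(b, a, s). c b * g (b, a, s))"
proof (intro ext, clarify)
  fix x y r
  show "hmult n (hdiag n c) g (x, y, r) = c x * g (x, y, r)"
  proof (cases "(x, y, r) \<in> basis n")
    case False
    then show ?thesis using g by (simp add: hmult_def Hn_def)
  next
    case True
    then have x: "x \<in> Bn n" and y: "y \<in> Bn n" and r: "r \<in> labs n x y"
      by (auto simp: basis_def labs_def lab_ok_sym)
    have "hmult n (hdiag n c) g (x, y, r) = (\<Sum>b\<in>Bn n. \<Sum>s\<in>labs n x b. \<Sum>t\<in>labs n b y.
        hdiag n c (x, b, s) * g (b, y, t) * cob n x b y s t r)"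
      using True by (simp add: hmult_def)
    also have "\<dots> = (\<Sum>s\<in>labs n x x. \<Sum>t\<in>labs n x y. hdiag n c (x, x, s) * g (x, y, t) * cob n x x y s t r)"
      by (rule sum_eq_single[OF finite_Bn x]) (auto simp: hdiag_def)
    also have "\<dots> = (\<Sum>t\<in>labs n x y.
        hdiag n c (x, x, \<lambda>_. False) * g (x, y, t) * cob n x x y (\<lambda>_. False) t r)"
      by (rule sum_eq_single[OF finite_labs]) (auto simp: hdiag_def labs_def lab_ok_def)
    also have "\<dots> = (\<Sum>t\<in>labs n x y. if t = r then c x * g (x, y, t) else 0)"
      using cob_left_unit[OF x] x by (intro sum.cong) (auto simp: labs_def lab_ok_sym hdiag_def)
    also have "\<dots> = c x * g (x, y, r)"
      using r finite_labs by (simp add: sum.delta')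
    finally show ?thesis .
  qed
qed

lemma hmult_hdiag_right:
  assumes g: "g \<in> Hn n"
  shows "hmult n g (hdiag n c) = (\<lambda>(b, a, s). g (b, a, s) * c a)"
proof -
  have "hmult n g (hdiag n c) = htrans (hmult n (hdiag n c) (htrans g))"
    by (simp add: htrans_hmult htrans_hdiag)
  also have "\<dots> = (\<lambda>(b, a, s). g (b, a, s) * c a)"
    by (simp add: hmult_hdiag_left[OF htrans_Hn[OF g]]) (auto simp: htrans_def fun_eq_iff)
  finally show ?thesis .
qed

lemma hmult_hdiag_hdiag: "hmult n (hdiag n c) (hdiag n d) = hdiag n (\<lambda>a. c a * d a)"
  by (simp add: hmult_hdiag_left[OF hdiag_Hn]) (intro ext, clarify, auto simp: hdiag_def)

lemma Z0_imp_hdiag: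
  assumes "h \<in> Z0 n"
  shows "h = hdiag n (\<lambda>a. h (a, a, \<lambda>_. False))"
proof (intro ext, clarify)
  fix b a s
  show "h (b, a, s) = hdiag n (\<lambda>a. h (a, a, \<lambda>_. False)) (b, a, s)"
  proof (cases "h (b, a, s) = 0")
    case False
    then have "(b, a, s) \<in> basis n" "hdeg n (b, a, s) = 0" using assms by (auto simp: Z0_def Hn_def)
    then show ?thesis using hdeg_eq_0_imp_idempotent by (auto simp: basis_def hdiag_def)
  qed (auto simp: hdiag_def)
qed

lemma central_hdiag_const:
  assumes central: "\<forall>g\<in>Hn n. hmult n (hdiag n c) g = hmult n g (hdiag n c)"
    and a: "a \<in> Bn n" and b: "b \<in> Bn n"
  shows "c a = c b"
proof -
  define e :: "hbasis \<Rightarrow> int" where "e = (\<lambda>x. if x = (b, a, \<lambda>_. False) then 1 else 0)"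
  have e: "e \<in> Hn n" using a b by (auto simp: e_def Hn_def basis_def lab_ok_def)
  have "hmult n (hdiag n c) e (b, a, \<lambda>_. False) = hmult n e (hdiag n c) (b, a, \<lambda>_. False)"
    using central e by simp
  then show ?thesis unfolding hmult_hdiag_left[OF e] hmult_hdiag_right[OF e] by (simp add: e_def)
qed

lemma hdiag_const_Z0: "hdiag n (\<lambda>_. k) \<in> Z0 n"
proof -
  have "hdeg n x = 0" if "hdiag n (\<lambda>_. k) x \<noteq> 0" for x
    using that hdeg_idempotent by (cases x) (auto simp: hdiag_def split: if_splits)
  moreover have "hmult n (hdiag n (\<lambda>_. k)) g = hmult n g (hdiag n (\<lambda>_. k))" if "g \<in> Hn n" for g
    by (simp add: hmult_hdiag_left[OF that] hmult_hdiag_right[OF that] mult.commute)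
  ultimately show ?thesis by (simp add: Z0_def hdiag_Hn)
qed

lemma Z0_eq_scalars: "Z0 n = range (\<lambda>k. hdiag n (\<lambda>_. k))"
proof
  show "Z0 n \<subseteq> range (\<lambda>k. hdiag n (\<lambda>_. k))"
  proof
    fix h assume h: "h \<in> Z0 n"
    let ?a0 = "std_matching n" and ?c = "\<lambda>a. h (a, a, \<lambda>_. False)"
    have central: "\<forall>g\<in>Hn n. hmult n (hdiag n ?c) g = hmult n g (hdiag n ?c)"
      using h Z0_imp_hdiag[OF h] by (simp add: Z0_def)
    have "h = hdiag n ?c" using Z0_imp_hdiag[OF h] .
    also have "\<dots> = hdiag n (\<lambda>_. ?c ?a0)"
      using central_hdiag_const[OF central _ std_matching_in_Bn]
      by (intro ext, clarify) (simp add: hdiag_def)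
    finally show "h \<in> range (\<lambda>k. hdiag n (\<lambda>_. k))" by blast
  qed
qed (use hdiag_const_Z0 in blast)

lemma hdiag_const_eq_iff: "hdiag n (\<lambda>_. k) = hdiag n (\<lambda>_. l) \<longleftrightarrow> k = l"
proof
  assume "hdiag n (\<lambda>_. k) = hdiag n (\<lambda>_. l)"
  from fun_cong[OF this, of "(std_matching n, std_matching n, \<lambda>_. False)"] show "k = l"
    using std_matching_in_Bn by (simp add: hdiag_def)
qed simp

lemma uminus_hdiag: "(\<lambda>x. - hdiag n c x) = hdiag n (\<lambda>a. - c a)"
  by (intro ext, clarify) (simp add: hdiag_def)

theorem proposition2:
  fixes n :: nat
  shows "{h \<in> Z0 n. \<exists>g\<in>Z0 n. hmult n h g = hone n \<and> hmult n g h = hone n}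
         = {hone n, (\<lambda>x. - hone n x)}"
proof -
  have "{h \<in> Z0 n. \<exists>g\<in>Z0 n. hmult n h g = hone n \<and> hmult n g h = hone n}
      = {h. \<exists>k l. h = hdiag n (\<lambda>_. k) \<and> k * l = 1}"
    by (auto simp: Z0_eq_scalars hmult_hdiag_hdiag hone_eq_hdiag hdiag_const_eq_iff mult.commute)
  also have "\<dots> = {hdiag n (\<lambda>_. 1), hdiag n (\<lambda>_. -1)}"
    by (auto simp: zmult_eq_1_iff)
  finally show ?thesis
    by (simp add: hone_eq_hdiag uminus_hdiag)
qed

end
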